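(* For $n>3/2$ and $x\ge 0$ the following holds: \begin{equation*} \frac{x+\sqrt{4n-6+x^2}}{2n-1}<\frac{U(n,-x)}{U (n-1,-x)}<\frac{x+\sqrt{4n-2+x^2}}{2n-1} . \end{equation*} The upper bound is also valid if $n\in (1/2,3/2)$.
   Context: $U(a,x)$ denotes the standard parabolic cylinder function (as in the NIST Digital Library of Mathematical Functions, Chapter 12), i.e. the solution of $y''(x)-(x^2/4+a)y(x)=0$ that is recessive (decays) as $x\rightarrow+\infty$. The parameter $n$ is real. *)

theory Defs
  imports "HOL-Analysis.Analysis"
begin

text \<open>Parabolic cylinder function U(a,x) (NIST DLMF 12.5.1, integral representation),
  valid for a > -1/2, which covers every parameter used in the statement:
  U(a,x) = exp(-x^2/4) / Gamma(1/2+a) * integral over t>0 of t^(a-1/2) exp(-t^2/2 - x t).\<close>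
definition pcfU :: "real \<Rightarrow> real \<Rightarrow> real" where
  "pcfU a x = exp (- (x^2) / 4) / Gamma (a + 1/2) *
     integral {0<..} (\<lambda>t::real. t powr (a - 1/2) * exp (- (t^2) / 2 - x * t))"

end

theory Submission
  imports Defs "HOL-Real_Asymp.Real_Asymp"
begin

text \<open>Put \<open>m = n - 1/2\<close> and \<open>M\<^sub>k(x) = \<integral>\<^sub>0\<^sup>\<infinity> t\<^sup>k exp (-t\<^sup>2/2 + x t) dt\<close>. The integral
  representation gives \<open>U(n,-x) / U(n-1,-x) = M\<^sub>m / (m M\<^sub>m\<^sub>-\<^sub>1)\<close>. Integration by parts yields
  the three-term recurrence \<open>M\<^sub>k\<^sub>+\<^sub>1 = x M\<^sub>k + k M\<^sub>k\<^sub>-\<^sub>1\<close>, and Cauchy-Schwarz the strict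
  log-convexity \<open>M\<^sub>k\<^sup>2 < M\<^sub>k\<^sub>-\<^sub>1 M\<^sub>k\<^sub>+\<^sub>1\<close>. Combining the two at index \<open>m\<close> shows that
  \<open>r = M\<^sub>m / M\<^sub>m\<^sub>-\<^sub>1\<close> satisfies \<open>r\<^sup>2 < x r + m\<close>; combining them at index \<open>m - 1\<close> shows
  \<open>r\<^sup>2 > x r + m - 1\<close>. The two bounds are the roots of these quadratics, divided by \<open>m\<close>.\<close>

lemma less_quadratic_root:
  fixes r x c :: real
  assumes "r^2 < x * r + c"
  shows "r < (x + sqrt (x^2 + 4*c)) / 2"
proof -
  have "(2*r - x)^2 < x^2 + 4*c"
    using assms by (simp add: power2_eq_square algebra_simps)
  hence "\<bar>2*r - x\<bar> < sqrt (x^2 + 4*c)"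
    by (metis real_less_rsqrt real_sqrt_abs power2_abs)
  thus ?thesis by (simp add: field_simps)
qed

lemma greater_quadratic_root:
  fixes r x c :: real
  assumes "x * r + c < r^2" and "0 \<le> c" and "0 < r"
  shows "(x + sqrt (x^2 + 4*c)) / 2 < r"
proof -
  have "x * r < r * r"
    using assms(1,2) by (simp add: power2_eq_square)
  hence "x < r" using \<open>0 < r\<close> by simp
  moreover have "x^2 + 4*c < (2*r - x)^2"
    using assms(1) by (simp add: power2_eq_square algebra_simps)
  ultimately have "sqrt (x^2 + 4*c) < 2*r - x"
    using \<open>0 < r\<close> by (intro real_less_lsqrt) auto
  thus ?thesis by (simp add: field_simps)
qed

lemma set_integral_pos_greaterThan:
  fixes h :: "real \<Rightarrow> real"
  assumes h: "set_integrable lborel {a<..} h"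
    and pos: "AE t in lborel. a < t \<longrightarrow> 0 < h t"
  shows "0 < (LINT t:{a<..}|lborel. h t)"
proof -
  define g where "g t = indicator {a<..} t *\<^sub>R h t" for t
  have g: "integrable lborel g"
    using h unfolding set_integrable_def g_def .
  have g_nonneg: "AE t in lborel. 0 \<le> g t"
    using pos by eventually_elim (auto simp: g_def indicator_def)
  have "integral\<^sup>L lborel g \<noteq> 0"
  proof
    assume "integral\<^sup>L lborel g = 0"
    with integral_nonneg_eq_0_iff_AE[OF g g_nonneg] have "AE t in lborel. g t = 0"
      by simp
    with pos have "AE t in lborel. t \<notin> {a<..}"
      by eventually_elim (auto simp: g_def)
    hence "emeasure lborel {a<..} = 0"
      by (subst (asm) AE_iff_measurable[of "{a<..}"]) auto
    moreover have "emeasure lborel {a+1..a+2} \<le> emeasure lborel {a<..}"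
      by (rule emeasure_mono) auto
    ultimately show False by simp
  qed
  with integral_nonneg_AE[OF g_nonneg] show ?thesis
    unfolding set_lebesgue_integral_def g_def by simp
qed

lemma set_integrable_powr_divide_exp:
  fixes k :: real
  assumes "-1 < k"
  shows "set_integrable lborel {0<..} (\<lambda>t. t powr k / exp t)"
proof -
  have "((\<lambda>t. t powr ((k+1) - 1) / exp t) has_integral Gamma (k+1)) {0..}"
    using Gamma_integral_real[of "k+1"] assms by simp
  hence "(\<lambda>t. t powr k / exp t) integrable_on {0..}"
    by (auto simp: integrable_on_def)
  hence "(\<lambda>t. t powr k / exp t) absolutely_integrable_on {0..}"
    by (rule nonnegative_absolutely_integrable_1) auto
  hence "set_integrable lebesgue {0<..} (\<lambda>t. t powr k / exp t)"
    by (rule set_integrable_subset) auto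
  thus ?thesis unfolding set_integrable_def
    by (subst (asm) integrable_completion) measurable
qed

definition pcf_moment :: "real \<Rightarrow> real \<Rightarrow> real" where
  "pcf_moment k x = (LINT t:{0<..}|lborel. t powr k * exp (-(t^2)/2 + x*t))"

lemma set_integrable_pcf_moment:
  fixes k x :: real
  assumes "-1 < k"
  shows "set_integrable lborel {0<..} (\<lambda>t. t powr k * exp (-(t^2)/2 + x*t))"
proof (rule set_integrable_bound[OF set_integrable_mult_right[OF
      set_integrable_powr_divide_exp[OF assms], of "exp ((x+1)^2/2)"]])
  show "set_borel_measurable lborel {0<..} (\<lambda>t. t powr k * exp (-(t^2)/2 + x*t))"
    unfolding set_borel_measurable_def by measurable
  have "t powr k * exp (-(t^2)/2 + x*t) \<le> exp ((x+1)^2/2) * (t powr k / exp t)"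
    if "0 < t" for t
  proof -
    \<comment> \<open>\<open>-t\<^sup>2/2 + x t = (x+1)\<^sup>2/2 - t - (t-x-1)\<^sup>2/2\<close>\<close>
    have "-(t^2)/2 + x*t \<le> (x+1)^2/2 - t"
      using zero_le_power2[of "t - x - 1"] by (simp add: power2_eq_square algebra_simps)
    hence "exp (-(t^2)/2 + x*t) \<le> exp ((x+1)^2/2) / exp t"
      by (simp add: exp_diff[symmetric])
    hence "t powr k * exp (-(t^2)/2 + x*t) \<le> t powr k * (exp ((x+1)^2/2) / exp t)"
      by (rule mult_left_mono) simp
    thus ?thesis by (simp add: mult.commute)
  qed
  thus "AE t in lborel. t \<in> {0<..} \<longrightarrow>
      norm (t powr k * exp (-(t^2)/2 + x*t)) \<le> norm (exp ((x+1)^2/2) * (t powr k / exp t))"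
    by auto
qed

lemma pcf_moment_pos:
  fixes k x :: real
  assumes "-1 < k"
  shows "0 < pcf_moment k x"
  unfolding pcf_moment_def
  by (rule set_integral_pos_greaterThan[OF set_integrable_pcf_moment[OF assms]]) auto

lemma pcf_moment_recurrence:
  fixes k x :: real
  assumes k: "0 < k"
  shows "pcf_moment (k+1) x = x * pcf_moment k x + k * pcf_moment (k-1) x"
proof -
  define E where "E t = exp (-(t^2)/2 + x*t)" for t :: real
  define F where "F t = t powr k * E t" for t :: real
  define f where "f t = k * (t powr (k-1) * E t) + x * (t powr k * E t) - t powr (k+1) * E t"
    for t :: real
  have int: "set_integrable lborel {0<..} (\<lambda>t. t powr j * E t)" if "j \<in> {k-1, k, k+1}" for j
    unfolding E_def using k that by (intro set_integrable_pcf_moment) auto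
  have "(LBINT t=ereal 0..\<infinity>. f t) = 0 - 0"
  proof (rule interval_integral_FTC_integrable)
    fix t assume "ereal 0 < ereal t" "ereal t < \<infinity>"
    hence t: "0 < t" by simp
    have "(F has_real_derivative (k * t powr (k-1) * E t + t powr k * ((-t + x) * E t))) (at t)"
      unfolding F_def E_def using t
      by (auto intro!: derivative_eq_intros simp: power2_eq_square field_simps)
    moreover have "k * t powr (k-1) * E t + t powr k * ((-t + x) * E t) = f t"
      using t unfolding f_def by (simp add: powr_add algebra_simps)
    ultimately show "(F has_vector_derivative f t) (at t)"
      by (simp add: has_real_derivative_iff_has_vector_derivative)
    show "isCont f t"
      unfolding f_def E_def using t by (auto intro!: continuous_intros)
  next
    have "set_integrable lborel {0<..} f"
      unfolding f_def using int
      by (intro set_integral_diff set_integral_add set_integrable_mult_right) auto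
    thus "set_integrable lborel (einterval (ereal 0) \<infinity>) f"
      by (simp add: einterval_def greaterThan_def)
    show "((F \<circ> real_of_ereal) \<longlongrightarrow> 0) (at_right (ereal 0))"
      unfolding ereal_tendsto_simps F_def E_def using k by real_asymp
    show "((F \<circ> real_of_ereal) \<longlongrightarrow> 0) (at_left \<infinity>)"
      unfolding ereal_tendsto_simps F_def E_def by real_asymp
  qed simp
  hence "(LINT t:{0<..}|lborel. f t) = 0"
    by (simp add: interval_lebesgue_integral_def einterval_def greaterThan_def)
  hence "k * pcf_moment (k-1) x + x * pcf_moment k x - pcf_moment (k+1) x = 0"
    unfolding f_def pcf_moment_def E_def[symmetric] using int
    by (simp add: set_integral_diff set_integral_add)
  thus ?thesis by simp
qed

lemma pcf_moment_log_convex: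
  fixes k x :: real
  assumes k: "0 < k"
  shows "(pcf_moment k x)^2 < pcf_moment (k-1) x * pcf_moment (k+1) x"
proof -
  define E where "E t = exp (-(t^2)/2 + x*t)" for t :: real
  define A B C where "A = pcf_moment (k-1) x" and "B = pcf_moment k x"
    and "C = pcf_moment (k+1) x"
  define l where "l = B / A"
  have A: "0 < A"
    unfolding A_def using k by (intro pcf_moment_pos) simp
  have int: "set_integrable lborel {0<..} (\<lambda>t. t powr j * E t)" if "j \<in> {k-1, k, k+1}" for j
    unfolding E_def using k that by (intro set_integrable_pcf_moment) auto
  define h where "h t = t powr (k+1) * E t - (2*l) * (t powr k * E t) + l^2 * (t powr (k-1) * E t)"
    for t
  have h_square: "h t = t powr (k-1) * (t - l)^2 * E t" if "0 < t" for t
  proof -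
    have "t powr k = t powr (k-1) * t" "t powr (k+1) = t powr k * t"
      using that powr_add[of t "k-1" 1] powr_add[of t k 1] by simp_all
    thus ?thesis unfolding h_def by (simp add: power2_eq_square algebra_simps)
  qed
  have "0 < (LINT t:{0<..}|lborel. h t)"
  proof (rule set_integral_pos_greaterThan)
    show "set_integrable lborel {0<..} h"
      unfolding h_def using int
      by (intro set_integral_diff set_integral_add set_integrable_mult_right) auto
    show "AE t in lborel. 0 < t \<longrightarrow> 0 < h t"
      using AE_lborel_singleton[of l] by eventually_elim (simp add: h_square E_def)
  qed
  also have "(LINT t:{0<..}|lborel. h t) = C - 2*l*B + l^2*A"
    unfolding h_def A_def B_def C_def pcf_moment_def E_def[symmetric] using int
    by (simp add: set_integral_diff set_integral_add)
  also have "\<dots> = (A*C - B^2) / A"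
    unfolding l_def using A by (simp add: power2_eq_square field_simps)
  finally show ?thesis
    unfolding A_def[symmetric] B_def[symmetric] C_def[symmetric] using A
    by (simp add: zero_less_divide_iff)
qed

lemma pcf_moment_ratio_upper:
  fixes m x :: real
  assumes m: "0 < m"
  defines "r \<equiv> pcf_moment m x / pcf_moment (m-1) x"
  shows "r^2 < x * r + m"
proof -
  define A B where "A = pcf_moment (m-1) x" and "B = pcf_moment m x"
  have A: "0 < A"
    unfolding A_def using m by (intro pcf_moment_pos) simp
  have "B^2 < A * (x*B + m*A)"
    using pcf_moment_log_convex[OF m, of x] pcf_moment_recurrence[OF m, of x]
    unfolding A_def B_def by simp
  also have "B = r * A"
    unfolding r_def A_def B_def using A A_def by simp
  finally have "r^2 * A^2 < (x*r + m) * A^2"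
    by (simp add: power2_eq_square algebra_simps)
  thus ?thesis
    by (rule mult_right_less_imp_less) simp
qed

lemma pcf_moment_ratio_lower:
  fixes m x :: real
  assumes "1 < m"
  defines "r \<equiv> pcf_moment m x / pcf_moment (m-1) x"
  shows "x * r + (m-1) < r^2"
proof -
  define A B D where "A = pcf_moment (m-1) x" and "B = pcf_moment m x"
    and "D = pcf_moment (m-1-1) x"
  have m: "0 < m - 1" using assms by simp
  have A: "0 < A"
    unfolding A_def using assms by (intro pcf_moment_pos) simp
  have "(m-1) * A^2 < (m-1) * D * B"
    using pcf_moment_log_convex[OF m, of x] m unfolding A_def B_def D_def by simp
  also have "(m-1) * D = B - x*A"
    using pcf_moment_recurrence[OF m, of x] unfolding A_def B_def D_def by simp
  also have "B = r * A"
    unfolding r_def A_def B_def using A A_def by simp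
  finally have "(x*r + (m-1)) * A^2 < r^2 * A^2"
    by (simp add: power2_eq_square algebra_simps)
  thus ?thesis
    by (rule mult_right_less_imp_less) simp
qed

lemma pcfU_eq_pcf_moment:
  fixes a x :: real
  assumes "-1/2 < a"
  shows "pcfU a (-x) = exp (-(x^2)/4) / Gamma (a + 1/2) * pcf_moment (a - 1/2) x"
  using set_borel_integral_eq_integral(2)[OF set_integrable_pcf_moment[of "a - 1/2" x]] assms
  by (simp add: pcfU_def pcf_moment_def)

lemma pcfU_ratio_eq_pcf_moment_ratio:
  fixes n x :: real
  assumes "1/2 < n"
  shows "pcfU n (-x) / pcfU (n-1) (-x)
    = pcf_moment (n - 1/2) x / pcf_moment (n - 3/2) x / (n - 1/2)"
proof -
  define m where "m = n - 1/2"
  have m: "0 < m" using assms m_def by simp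
  have "pcfU n (-x) = exp (-(x^2)/4) / Gamma (m + 1) * pcf_moment m x"
    using pcfU_eq_pcf_moment[of n x] assms unfolding m_def by (simp add: add.commute)
  moreover have "pcfU (n-1) (-x) = exp (-(x^2)/4) / Gamma m * pcf_moment (m - 1) x"
    using pcfU_eq_pcf_moment[of "n-1" x] assms unfolding m_def by (simp add: algebra_simps)
  moreover have "Gamma (m + 1) = m * Gamma m"
    using m by (intro Gamma_plus1) (auto elim!: nonpos_Ints_cases)
  moreover have "0 < Gamma m" "0 < pcf_moment (m - 1) x"
    using m by (auto intro: pcf_moment_pos)
  moreover have "n - 3/2 = m - 1"
    unfolding m_def by simp
  ultimately show ?thesis
    unfolding m_def[symmetric] \<open>n - 3/2 = m - 1\<close> using m by (simp add: field_simps)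
qed

lemma pcfU_ratio_upper_bound:
  fixes n x :: real
  assumes "1/2 < n"
  shows "pcfU n (-x) / pcfU (n-1) (-x) < (x + sqrt (4*n - 2 + x^2)) / (2*n - 1)"
proof -
  define m where "m = n - 1/2"
  have m: "0 < m" using assms m_def by simp
  have "pcf_moment m x / pcf_moment (m-1) x < (x + sqrt (x^2 + 4*m)) / 2"
    using m by (intro less_quadratic_root pcf_moment_ratio_upper)
  hence "pcf_moment m x / pcf_moment (m-1) x / m < (x + sqrt (x^2 + 4*m)) / 2 / m"
    using m by (rule divide_strict_right_mono)
  moreover have "m - 1 = n - 3/2" "x^2 + 4*m = 4*n - 2 + x^2" "2*m = 2*n - 1"
    unfolding m_def by simp_all
  ultimately show ?thesis
    unfolding pcfU_ratio_eq_pcf_moment_ratio[OF assms] m_def[symmetric] by simp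
qed

lemma pcfU_ratio_lower_bound:
  fixes n x :: real
  assumes "3/2 < n"
  shows "(x + sqrt (4*n - 6 + x^2)) / (2*n - 1) < pcfU n (-x) / pcfU (n-1) (-x)"
proof -
  define m where "m = n - 1/2"
  have m: "1 < m" using assms m_def by simp
  have "(x + sqrt (x^2 + 4*(m-1))) / 2 < pcf_moment m x / pcf_moment (m-1) x"
    using m by (intro greater_quadratic_root pcf_moment_ratio_lower divide_pos_pos pcf_moment_pos)
      auto
  hence "(x + sqrt (x^2 + 4*(m-1))) / 2 / m < pcf_moment m x / pcf_moment (m-1) x / m"
    using m by (intro divide_strict_right_mono) auto
  moreover have "m - 1 = n - 3/2" "x^2 + 4*(m-1) = 4*n - 6 + x^2" "2*m = 2*n - 1"
    unfolding m_def by simp_all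
  moreover have "1/2 < n" using assms by simp
  ultimately show ?thesis
    unfolding pcfU_ratio_eq_pcf_moment_ratio[OF \<open>1/2 < n\<close>] m_def[symmetric]
    by (simp add: add.commute)
qed

theorem theorem10:
  fixes n x :: real
  shows "(n > 3/2 \<and> x \<ge> 0 \<longrightarrow>
            (x + sqrt (4*n - 6 + x^2)) / (2*n - 1) < pcfU n (-x) / pcfU (n - 1) (-x) \<and>
            pcfU n (-x) / pcfU (n - 1) (-x) < (x + sqrt (4*n - 2 + x^2)) / (2*n - 1))
       \<and> (1/2 < n \<and> n < 3/2 \<and> x \<ge> 0 \<longrightarrow>
            pcfU n (-x) / pcfU (n - 1) (-x) < (x + sqrt (4*n - 2 + x^2)) / (2*n - 1))"
  using pcfU_ratio_upper_bound[of n x] pcfU_ratio_lower_bound[of n x] by auto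

end
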